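(* Let $G_1$ and $G_2$ be profinite-$C$ groups. Then $G_1\times G_2$ is a profinite-$C$ group.
   Context: A permutable complement of a subgroup $H$ of a group $G$ is a subgroup $K$ with $G=HK$ and $H\cap K=1$. A profinite group $G$ is a profinite-$C$ group if every closed subgroup of $G$ has a closed permutable complement in $G$. *)

theory Defs
  imports "HOL-Analysis.Analysis" "HOL-Algebra.Algebra"
begin

definition topological_group :: "('a, 'b) monoid_scheme \<Rightarrow> 'a topology \<Rightarrow> bool" where
  "topological_group G T \<longleftrightarrow>
     group G \<and> topspace T = carrier G \<and>
     continuous_map (prod_topology T T) T (\<lambda>(x, y). x \<otimes>\<^bsub>G\<^esub> y) \<and>
     continuous_map T T (\<lambda>x. inv\<^bsub>G\<^esub> x)"

definition totally_disconnected_space :: "'a topology \<Rightarrow> bool" where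
  "totally_disconnected_space T \<longleftrightarrow>
     (\<forall>x \<in> topspace T. connected_component_of_set T x = {x})"

definition profinite_group :: "('a, 'b) monoid_scheme \<Rightarrow> 'a topology \<Rightarrow> bool" where
  "profinite_group G T \<longleftrightarrow>
     topological_group G T \<and> compact_space T \<and> Hausdorff_space T \<and>
     totally_disconnected_space T"

definition permutable_complement :: "('a, 'b) monoid_scheme \<Rightarrow> 'a set \<Rightarrow> 'a set \<Rightarrow> bool" where
  "permutable_complement G H K \<longleftrightarrow>
     subgroup K G \<and> H <#>\<^bsub>G\<^esub> K = carrier G \<and> H \<inter> K = {\<one>\<^bsub>G\<^esub>}"

definition profinite_C_group :: "('a, 'b) monoid_scheme \<Rightarrow> 'a topology \<Rightarrow> bool" where
  "profinite_C_group G T \<longleftrightarrow>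
     profinite_group G T \<and>
     (\<forall>H. subgroup H G \<and> closedin T H \<longrightarrow>
        (\<exists>K. closedin T K \<and> permutable_complement G H K))"

end

theory Submission
  imports Defs
begin

text \<open>For a closed subgroup H of G1 \<times> G2, the projection L = fst ` H is closed in G1, because
  projecting along the compact factor is a closed map, and the fibre N = {y. (1, y) \<in> H} is
  closed in G2. If K1 and K2 are closed complements of L and N, then K1 \<times> K2 is a closed complement
  of H: writing x = l k1 with (l, m) \<in> H and m\<inverse> y = n k2 with (1, n) \<in> H gives
  (x, y) = (l, m n) (k1, k2); and an element of H \<inter> (K1 \<times> K2) has first coordinate in L \<inter> K1 = 1,
  hence second coordinate in N \<inter> K2 = 1.\<close>

lemma topological_group_DirProd:
  assumes "topological_group G1 T1" and "topological_group G2 T2"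
  shows "topological_group (G1 \<times>\<times> G2) (prod_topology T1 T2)"
proof -
  have g1: "group G1" and t1: "topspace T1 = carrier G1"
    and m1: "continuous_map (prod_topology T1 T1) T1 (\<lambda>(x, y). x \<otimes>\<^bsub>G1\<^esub> y)"
    and i1: "continuous_map T1 T1 (\<lambda>x. inv\<^bsub>G1\<^esub> x)"
    using assms(1) unfolding topological_group_def by auto
  have g2: "group G2" and t2: "topspace T2 = carrier G2"
    and m2: "continuous_map (prod_topology T2 T2) T2 (\<lambda>(x, y). x \<otimes>\<^bsub>G2\<^esub> y)"
    and i2: "continuous_map T2 T2 (\<lambda>x. inv\<^bsub>G2\<^esub> x)"
    using assms(2) unfolding topological_group_def by auto
  let ?P = "prod_topology T1 T2"
  have fsts: "continuous_map (prod_topology ?P ?P) (prod_topology T1 T1) (\<lambda>z. (fst (fst z), fst (snd z)))"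
   and snds: "continuous_map (prod_topology ?P ?P) (prod_topology T2 T2) (\<lambda>z. (snd (fst z), snd (snd z)))"
    by (simp_all add: continuous_map_paired continuous_map_fst continuous_map_snd
        continuous_map_of_fst[unfolded o_def] continuous_map_of_snd[unfolded o_def])
  have "continuous_map (prod_topology ?P ?P) T1 (\<lambda>z. fst (fst z) \<otimes>\<^bsub>G1\<^esub> fst (snd z))"
    using continuous_map_compose[OF fsts m1] by (simp add: o_def)
  moreover have "continuous_map (prod_topology ?P ?P) T2 (\<lambda>z. snd (fst z) \<otimes>\<^bsub>G2\<^esub> snd (snd z))"
    using continuous_map_compose[OF snds m2] by (simp add: o_def)
  ultimately have "continuous_map (prod_topology ?P ?P) ?P (\<lambda>(x, y). x \<otimes>\<^bsub>G1 \<times>\<times> G2\<^esub> y)"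
    by (simp add: case_prod_unfold mult_DirProd' continuous_map_paired)
  moreover have "continuous_map ?P ?P (\<lambda>z. (inv\<^bsub>G1\<^esub> fst z, inv\<^bsub>G2\<^esub> snd z))"
    by (simp add: continuous_map_paired continuous_map_compose[OF continuous_map_fst i1, unfolded o_def]
        continuous_map_compose[OF continuous_map_snd i2, unfolded o_def])
  then have "continuous_map ?P ?P (\<lambda>x. inv\<^bsub>G1 \<times>\<times> G2\<^esub> x)"
    by (rule continuous_map_eq) (auto simp: t1 t2 g1 g2)
  ultimately show ?thesis
    unfolding topological_group_def using g1 g2 t1 t2 by (simp add: DirProd_group)
qed

lemma totally_disconnected_space_prod_topology:
  assumes "totally_disconnected_space T1" and "totally_disconnected_space T2"
  shows "totally_disconnected_space (prod_topology T1 T2)"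
  using assms by (auto simp: totally_disconnected_space_def connected_component_of_pair)

lemma profinite_group_DirProd:
  assumes "profinite_group G1 T1" and "profinite_group G2 T2"
  shows "profinite_group (G1 \<times>\<times> G2) (prod_topology T1 T2)"
  using assms unfolding profinite_group_def
  by (simp add: topological_group_DirProd totally_disconnected_space_prod_topology
      compact_space_prod_topology Hausdorff_space_prod_topology)

lemma subgroup_fst_image:
  assumes "group G1" and "group G2" and "subgroup H (G1 \<times>\<times> G2)"
  shows "subgroup (fst ` H) G1"
proof -
  have "fst \<in> hom (G1 \<times>\<times> G2) G1"
    by (rule homI) (auto simp: mult_DirProd')
  then have "group_hom (G1 \<times>\<times> G2) G1 fst"
    using assms by (intro group_hom.intro group_hom_axioms.intro DirProd_group)
  then show ?thesis
    using group_hom.subgroup_img_is_subgroup assms(3) by blast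
qed

lemma subgroup_fibre_DirProd:
  assumes "group G1" and "group G2" and H: "subgroup H (G1 \<times>\<times> G2)"
  shows "subgroup {y. (\<one>\<^bsub>G1\<^esub>, y) \<in> H} G2"
proof (rule group.subgroupI[OF assms(2)])
  have sub: "H \<subseteq> carrier G1 \<times> carrier G2"
    using subgroup.subset[OF H] by simp
  then show "{y. (\<one>\<^bsub>G1\<^esub>, y) \<in> H} \<subseteq> carrier G2"
    by auto
  show "{y. (\<one>\<^bsub>G1\<^esub>, y) \<in> H} \<noteq> {}"
    using subgroup.one_closed[OF H] by auto
  fix y z
  assume y: "y \<in> {y. (\<one>\<^bsub>G1\<^esub>, y) \<in> H}" and z: "z \<in> {y. (\<one>\<^bsub>G1\<^esub>, y) \<in> H}"
  have "inv\<^bsub>G1 \<times>\<times> G2\<^esub> (\<one>\<^bsub>G1\<^esub>, y) \<in> H"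
    using subgroup.m_inv_closed[OF H] y by simp
  moreover have "y \<in> carrier G2"
    using y sub by auto
  ultimately show "inv\<^bsub>G2\<^esub> y \<in> {y. (\<one>\<^bsub>G1\<^esub>, y) \<in> H}"
    using assms by (simp add: group.is_monoid monoid.inv_one)
  show "y \<otimes>\<^bsub>G2\<^esub> z \<in> {y. (\<one>\<^bsub>G1\<^esub>, y) \<in> H}"
    using subgroup.m_closed[OF H, of "(\<one>\<^bsub>G1\<^esub>, y)" "(\<one>\<^bsub>G1\<^esub>, z)"] y z assms(1)
    by (simp add: group.is_monoid)
qed

lemma closedin_fst_image:
  assumes "closedin (prod_topology T1 T2) H" and "compact_space T2"
  shows "closedin T1 (fst ` H)"
  using assms closed_map_fst closed_map_def by blast

lemma closedin_fibre:
  assumes "closedin (prod_topology T1 T2) H" and "a \<in> topspace T1"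
  shows "closedin T2 {y. (a, y) \<in> H}"
proof -
  have "continuous_map T2 (prod_topology T1 T2) (\<lambda>y. (a, y))"
    using assms(2) by (intro continuous_map_pairedI) auto
  from closedin_continuous_map_preimage[OF this assms(1)]
  have "closedin T2 {y \<in> topspace T2. (a, y) \<in> H}" .
  moreover have "{y \<in> topspace T2. (a, y) \<in> H} = {y. (a, y) \<in> H}"
    using closedin_subset[OF assms(1)] by auto
  ultimately show ?thesis
    by simp
qed

lemma Int_Times_eq_one_DirProd:
  assumes H: "subgroup H (G1 \<times>\<times> G2)"
    and K1: "fst ` H \<inter> K1 = {\<one>\<^bsub>G1\<^esub>}"
    and K2: "{y. (\<one>\<^bsub>G1\<^esub>, y) \<in> H} \<inter> K2 = {\<one>\<^bsub>G2\<^esub>}"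
  shows "H \<inter> (K1 \<times> K2) = {\<one>\<^bsub>G1 \<times>\<times> G2\<^esub>}"
proof
  show "H \<inter> (K1 \<times> K2) \<subseteq> {\<one>\<^bsub>G1 \<times>\<times> G2\<^esub>}"
  proof
    fix z assume z: "z \<in> H \<inter> (K1 \<times> K2)"
    then have "fst z = \<one>\<^bsub>G1\<^esub>"
      using K1 by force
    with z K2 have "snd z = \<one>\<^bsub>G2\<^esub>"
      by (cases z) auto
    with \<open>fst z = \<one>\<^bsub>G1\<^esub>\<close> show "z \<in> {\<one>\<^bsub>G1 \<times>\<times> G2\<^esub>}"
      by (cases z) simp
  qed
  show "{\<one>\<^bsub>G1 \<times>\<times> G2\<^esub>} \<subseteq> H \<inter> (K1 \<times> K2)"
    using subgroup.one_closed[OF H] K1 K2 by auto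
qed

lemma set_mult_Times_eq_carrier_DirProd:
  assumes "group G1" and "group G2" and H: "subgroup H (G1 \<times>\<times> G2)"
    and K1: "subgroup K1 G1" "fst ` H <#>\<^bsub>G1\<^esub> K1 = carrier G1"
    and K2: "subgroup K2 G2" "{y. (\<one>\<^bsub>G1\<^esub>, y) \<in> H} <#>\<^bsub>G2\<^esub> K2 = carrier G2"
  shows "H <#>\<^bsub>G1 \<times>\<times> G2\<^esub> (K1 \<times> K2) = carrier (G1 \<times>\<times> G2)"
proof
  interpret G1: group G1 by fact
  interpret G2: group G2 by fact
  interpret P: group "G1 \<times>\<times> G2" using assms by (simp add: DirProd_group)
  show "H <#>\<^bsub>G1 \<times>\<times> G2\<^esub> (K1 \<times> K2) \<subseteq> carrier (G1 \<times>\<times> G2)"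
    using P.set_mult_closed[OF subgroup.subset[OF H]] subgroup.subset[OF K1(1)]
      subgroup.subset[OF K2(1)] by (simp add: Sigma_mono)
  have Hsub: "H \<subseteq> carrier G1 \<times> carrier G2"
    using subgroup.subset[OF H] by simp
  show "carrier (G1 \<times>\<times> G2) \<subseteq> H <#>\<^bsub>G1 \<times>\<times> G2\<^esub> (K1 \<times> K2)"
  proof
    fix z assume "z \<in> carrier (G1 \<times>\<times> G2)"
    then obtain x y where z: "z = (x, y)" and x: "x \<in> carrier G1" and y: "y \<in> carrier G2"
      by auto
    obtain l k1 where "l \<in> fst ` H" and k1: "k1 \<in> K1" and x_eq: "x = l \<otimes>\<^bsub>G1\<^esub> k1"
      using x K1(2) unfolding set_mult_def by blast
    then obtain m where lm: "(l, m) \<in> H"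
      by force
    then have m: "m \<in> carrier G2"
      using Hsub by auto
    obtain n k2 where n: "(\<one>\<^bsub>G1\<^esub>, n) \<in> H" and k2: "k2 \<in> K2"
      and y_eq: "inv\<^bsub>G2\<^esub> m \<otimes>\<^bsub>G2\<^esub> y = n \<otimes>\<^bsub>G2\<^esub> k2"
      using m y K2(2) unfolding set_mult_def by blast
    have "n \<in> carrier G2" and "k2 \<in> carrier G2"
      using n k2 Hsub subgroup.subset[OF K2(1)] by auto
    then have "y = m \<otimes>\<^bsub>G2\<^esub> n \<otimes>\<^bsub>G2\<^esub> k2"
      using y_eq m y by (metis G2.inv_solve_left G2.m_assoc G2.m_closed)
    then have "z = (l, m \<otimes>\<^bsub>G2\<^esub> n) \<otimes>\<^bsub>G1 \<times>\<times> G2\<^esub> (k1, k2)"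
      using z x_eq by simp
    moreover have "(l, m \<otimes>\<^bsub>G2\<^esub> n) \<in> H"
      using subgroup.m_closed[OF H lm n] lm Hsub by auto
    ultimately show "z \<in> H <#>\<^bsub>G1 \<times>\<times> G2\<^esub> (K1 \<times> K2)"
      using k1 k2 unfolding set_mult_def by blast
  qed
qed

lemma permutable_complement_DirProd:
  assumes "group G1" and "group G2" and H: "subgroup H (G1 \<times>\<times> G2)"
    and "permutable_complement G1 (fst ` H) K1"
    and "permutable_complement G2 {y. (\<one>\<^bsub>G1\<^esub>, y) \<in> H} K2"
  shows "permutable_complement (G1 \<times>\<times> G2) H (K1 \<times> K2)"
  using assms DirProd_subgroups Int_Times_eq_one_DirProd[OF H] set_mult_Times_eq_carrier_DirProd
  unfolding permutable_complement_def by metis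

theorem lemma2p3:
  fixes G1 :: "('a, 'c) monoid_scheme" and T1 :: "'a topology"
    and G2 :: "('b, 'd) monoid_scheme" and T2 :: "'b topology"
  assumes "profinite_C_group G1 T1" and "profinite_C_group G2 T2"
  shows "profinite_C_group (G1 \<times>\<times> G2) (prod_topology T1 T2)"
  unfolding profinite_C_group_def
proof (intro conjI allI impI)
  have p1: "profinite_group G1 T1" and p2: "profinite_group G2 T2"
    using assms unfolding profinite_C_group_def by auto
  then show "profinite_group (G1 \<times>\<times> G2) (prod_topology T1 T2)"
    by (rule profinite_group_DirProd)
  have g1: "group G1" and g2: "group G2" and "topspace T1 = carrier G1"
    and "compact_space T2"
    using p1 p2 unfolding profinite_group_def topological_group_def by auto
  then have one: "\<one>\<^bsub>G1\<^esub> \<in> topspace T1"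
    by (simp add: group.is_monoid)
  fix H assume "subgroup H (G1 \<times>\<times> G2) \<and> closedin (prod_topology T1 T2) H"
  then have H: "subgroup H (G1 \<times>\<times> G2)" and Hc: "closedin (prod_topology T1 T2) H"
    by auto
  obtain K1 where "closedin T1 K1" and "permutable_complement G1 (fst ` H) K1"
    using assms(1) subgroup_fst_image[OF g1 g2 H] closedin_fst_image[OF Hc \<open>compact_space T2\<close>]
    unfolding profinite_C_group_def by blast
  moreover obtain K2 where "closedin T2 K2"
    and "permutable_complement G2 {y. (\<one>\<^bsub>G1\<^esub>, y) \<in> H} K2"
    using assms(2) subgroup_fibre_DirProd[OF g1 g2 H] closedin_fibre[OF Hc one]
    unfolding profinite_C_group_def by blast
  ultimately have "closedin (prod_topology T1 T2) (K1 \<times> K2)"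
    and "permutable_complement (G1 \<times>\<times> G2) H (K1 \<times> K2)"
    by (simp_all add: closedin_prod_Times_iff permutable_complement_DirProd[OF g1 g2 H])
  then show "\<exists>K. closedin (prod_topology T1 T2) K \<and> permutable_complement (G1 \<times>\<times> G2) H K"
    by blast
qed

end
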